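(* Let the functions satisfy the $M=2$ system and the boundary conditions (B) (see context), and assume $\eta_0'(s)\neq0$ for $s>0$. Define $F:=-3x_0y_1-3x_1y_2-e_1x_0y_2$. Then $$F^2=4e_1^2(\eta_0')^2-12e_2(\eta_0')^2+12\eta_0(\eta_0')^2-36s(\eta_0')^3+9s^2(\eta_0'')^2-12s\eta_0'\big(\eta_0''+s\eta_0'''\big).$$
   Context: Fix complex parameters $\nu_0,\nu_1,\nu_2$ with $\nu_2-\nu_1\notin\mathbb Z$, and let $e_1=\nu_0+\nu_1+\nu_2$, $e_2=\nu_0\nu_1+\nu_0\nu_2+\nu_1\nu_2$, $e_3=\nu_0\nu_1\nu_2$. The $M=2$ system is the following system for smooth complex-valued functions $x_0,x_1,x_2,y_0,y_1,y_2,\xi_0,\xi_1,\xi_2,\eta_0,\eta_1,\eta_2$ of $s\in(0,\infty)$, with $'=d/ds$: $sx_0'=-\eta_0x_0-x_1$, $sx_1'=-\eta_1x_0-x_2$, $sx_2'=-\eta_2x_0-sx_0+\xi_0x_0+\xi_1x_1+\xi_2x_2$, $sy_2'=-\xi_2y_2+y_1$, $sy_1'=-\xi_1y_2+y_0$, $sy_0'=-\xi_0y_2+sy_2+\eta_0y_0+\eta_1y_1+\eta_2y_2$, $\xi_0'=-x_0y_0$, $\xi_1'=-x_0y_1$, $\xi_2'=-x_0y_2$, $\eta_0'=-x_0y_2$, $\eta_1'=-x_1y_2$, $\eta_2'=-x_2y_2$. Boundary conditions (B): as $s\to0^+$, $\eta_0,\eta_1,\eta_2\to0$, $\xi_0\to-e_3$,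 $\xi_1\to e_2$, $\xi_2\to-e_1$, and $x_j(s)y_k(s)\to0$, $s\,x_j(s)y_k(s)\to0$ for all $j,k\in\{0,1,2\}$. *)

theory Defs
  imports "HOL-Analysis.Analysis"
begin

abbreviation dv :: "(real \<Rightarrow> complex) \<Rightarrow> real \<Rightarrow> complex" where
  "dv f s \<equiv> vector_derivative f (at s)"

end

theory Submission
  imports Defs
begin

text \<open>Along solutions of the system, \<open>\<xi>2 - \<eta>0\<close>, \<open>x0 y0 + x1 y1 + x2 y2\<close> and
  \<open>\<eta>1 - \<xi>2 + \<xi>2 \<eta>0 - \<xi>1 - s x0 y2\<close> have zero derivative, so by (B) they are the constants
  \<open>-e1\<close>, \<open>0\<close> and \<open>e1 - e2\<close>. Differentiating \<open>\<eta>0' = -x0 y2\<close> and eliminating the derivatives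
  of the \<open>x\<close>'s and \<open>y\<close>'s with the system expresses \<open>s \<eta>0''\<close> and \<open>s\<^sup>2 \<eta>0'''\<close> as polynomials
  in the unknowns; modulo the three first integrals the claimed formula is then a polynomial
  identity.\<close>

lemma eq_limit_at_right_if_vector_derivative_zero:
  fixes f :: "real \<Rightarrow> 'a::real_normed_vector"
  assumes deriv: "\<And>t. t > 0 \<Longrightarrow> (f has_vector_derivative 0) (at t)"
    and lim: "(f \<longlongrightarrow> c) (at_right 0)"
    and "s > 0"
  shows "f s = c"
proof -
  obtain k where k: "\<And>t. t \<in> {0<..} \<Longrightarrow> f t = k"
    using has_vector_derivative_zero_constant[of "{0<..}" f] deriv
    by (metis convex_real_interval(3) greaterThan_iff has_vector_derivative_at_within)
  have "eventually (\<lambda>t. f t = k) (at_right 0)"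
    using eventually_at_right_less[of 0] by eventually_elim (simp add: k)
  then have "(f \<longlongrightarrow> k) (at_right 0)"
    by (rule tendsto_eventually)
  with lim have "c = k"
    using tendsto_unique[OF trivial_limit_at_right_real] by blast
  with k \<open>s > 0\<close> show ?thesis by simp
qed

lemma vector_derivative_cong_open:
  assumes "open S" "s \<in> S" "\<And>t. t \<in> S \<Longrightarrow> f t = g t"
  shows "dv f s = dv g s"
  using assms by (intro vector_derivative_cong_eq) (auto simp: eventually_nhds)

lemma vector_derivative_divide_of_real:
  fixes g :: "real \<Rightarrow> complex"
  assumes f: "\<And>t. t > 0 \<Longrightarrow> f t = g t / of_real t"
    and g: "g differentiable (at s)" and "s > 0"
  shows "of_real s ^ 2 * dv f s = of_real s * dv g s - g s"
proof -
  have "((\<lambda>t. g t * of_real (inverse t)) has_vector_derivative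
          g s * of_real (- (inverse s ^ 2)) + dv g s * of_real (inverse s)) (at s)"
    using g \<open>s > 0\<close>
    by (intro has_vector_derivative_mult has_vector_derivative_of_real DERIV_inverse[folded numeral_2_eq_2])
       (auto simp: vector_derivative_works[symmetric])
  moreover have "dv f s = dv (\<lambda>t. g t * of_real (inverse t)) s"
    using \<open>s > 0\<close> f
    by (intro vector_derivative_cong_open[of "{0<..}"]) (auto simp: divide_inverse)
  ultimately have "dv f s = g s * of_real (- (inverse s ^ 2)) + dv g s * of_real (inverse s)"
    by (simp add: vector_derivative_at)
  with \<open>s > 0\<close> show ?thesis
    by (simp add: field_simps power2_eq_square)
qed

locale M2_system =
  fixes x0 x1 x2 y0 y1 y2 \<xi>0 \<xi>1 \<xi>2 \<eta>0 \<eta>1 \<eta>2 :: "real \<Rightarrow> complex"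
  assumes differentiable: "\<And>s f. s > 0 \<Longrightarrow>
      f \<in> {x0, x1, x2, y0, y1, y2, \<xi>0, \<xi>1, \<xi>2, \<eta>0, \<eta>1, \<eta>2} \<Longrightarrow> f differentiable (at s)"
    and x0_ode: "\<And>s. s > 0 \<Longrightarrow> of_real s * dv x0 s = - \<eta>0 s * x0 s - x1 s"
    and x1_ode: "\<And>s. s > 0 \<Longrightarrow> of_real s * dv x1 s = - \<eta>1 s * x0 s - x2 s"
    and x2_ode: "\<And>s. s > 0 \<Longrightarrow> of_real s * dv x2 s = - \<eta>2 s * x0 s - of_real s * x0 s
                                     + \<xi>0 s * x0 s + \<xi>1 s * x1 s + \<xi>2 s * x2 s"
    and y2_ode: "\<And>s. s > 0 \<Longrightarrow> of_real s * dv y2 s = - \<xi>2 s * y2 s + y1 s"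
    and y1_ode: "\<And>s. s > 0 \<Longrightarrow> of_real s * dv y1 s = - \<xi>1 s * y2 s + y0 s"
    and y0_ode: "\<And>s. s > 0 \<Longrightarrow> of_real s * dv y0 s = - \<xi>0 s * y2 s + of_real s * y2 s
                                     + \<eta>0 s * y0 s + \<eta>1 s * y1 s + \<eta>2 s * y2 s"
    and \<xi>0_ode: "\<And>s. s > 0 \<Longrightarrow> dv \<xi>0 s = - x0 s * y0 s"
    and \<xi>1_ode: "\<And>s. s > 0 \<Longrightarrow> dv \<xi>1 s = - x0 s * y1 s"
    and \<xi>2_ode: "\<And>s. s > 0 \<Longrightarrow> dv \<xi>2 s = - x0 s * y2 s"
    and \<eta>0_ode: "\<And>s. s > 0 \<Longrightarrow> dv \<eta>0 s = - x0 s * y2 s"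
    and \<eta>1_ode: "\<And>s. s > 0 \<Longrightarrow> dv \<eta>1 s = - x1 s * y2 s"
    and \<eta>2_ode: "\<And>s. s > 0 \<Longrightarrow> dv \<eta>2 s = - x2 s * y2 s"
begin

lemma has_vector_derivative_components:
  assumes "s > 0"
  shows "(x0 has_vector_derivative dv x0 s) (at s)" "(x1 has_vector_derivative dv x1 s) (at s)"
    "(x2 has_vector_derivative dv x2 s) (at s)" "(y0 has_vector_derivative dv y0 s) (at s)"
    "(y1 has_vector_derivative dv y1 s) (at s)" "(y2 has_vector_derivative dv y2 s) (at s)"
    "(\<xi>0 has_vector_derivative dv \<xi>0 s) (at s)" "(\<xi>1 has_vector_derivative dv \<xi>1 s) (at s)"
    "(\<xi>2 has_vector_derivative dv \<xi>2 s) (at s)" "(\<eta>0 has_vector_derivative dv \<eta>0 s) (at s)"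
    "(\<eta>1 has_vector_derivative dv \<eta>1 s) (at s)" "(\<eta>2 has_vector_derivative dv \<eta>2 s) (at s)"
  using differentiable[OF assms] by (simp_all add: vector_derivative_works[symmetric])

lemma \<xi>2_eq_\<eta>0_minus_e1:
  assumes "(\<xi>2 \<longlongrightarrow> - e1) (at_right 0)" "(\<eta>0 \<longlongrightarrow> 0) (at_right 0)" "s > 0"
  shows "\<xi>2 s = \<eta>0 s - e1"
proof -
  have "\<xi>2 s - \<eta>0 s = - e1"
  proof (rule eq_limit_at_right_if_vector_derivative_zero[where f = "\<lambda>t. \<xi>2 t - \<eta>0 t"])
    fix t :: real assume "t > 0"
    then show "((\<lambda>t. \<xi>2 t - \<eta>0 t) has_vector_derivative 0) (at t)"
      using has_vector_derivative_diff[OF has_vector_derivative_components(9,10)]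
      by (simp add: \<xi>2_ode \<eta>0_ode)
  qed (use assms tendsto_diff[OF assms(1,2)] in simp_all)
  then show ?thesis by (simp add: algebra_simps)
qed

lemma trace_xy_eq_0:
  assumes "((\<lambda>t. x0 t * y0 t) \<longlongrightarrow> 0) (at_right 0)" "((\<lambda>t. x1 t * y1 t) \<longlongrightarrow> 0) (at_right 0)"
    "((\<lambda>t. x2 t * y2 t) \<longlongrightarrow> 0) (at_right 0)" "s > 0"
  shows "x0 s * y0 s + x1 s * y1 s + x2 s * y2 s = 0"
proof (rule eq_limit_at_right_if_vector_derivative_zero)
  fix t :: real assume t: "t > 0"
  let ?D = "x0 t * dv y0 t + dv x0 t * y0 t + (x1 t * dv y1 t + dv x1 t * y1 t)
            + (x2 t * dv y2 t + dv x2 t * y2 t)"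
  have "((\<lambda>t. x0 t * y0 t + x1 t * y1 t + x2 t * y2 t) has_vector_derivative ?D) (at t)"
    using t by (intro has_vector_derivative_add has_vector_derivative_mult has_vector_derivative_components)
  moreover have "of_real t * ?D = 0"
  proof -
    have "of_real t * ?D = x0 t * (of_real t * dv y0 t) + (of_real t * dv x0 t) * y0 t
        + x1 t * (of_real t * dv y1 t) + (of_real t * dv x1 t) * y1 t
        + x2 t * (of_real t * dv y2 t) + (of_real t * dv x2 t) * y2 t"
      by (simp add: algebra_simps)
    also have "\<dots> = 0"
      using t by (simp add: x0_ode x1_ode x2_ode y0_ode y1_ode y2_ode algebra_simps)
    finally show ?thesis .
  qed
  ultimately show "((\<lambda>t. x0 t * y0 t + x1 t * y1 t + x2 t * y2 t) has_vector_derivative 0) (at t)"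
    using t by simp
qed (use assms tendsto_add[OF tendsto_add[OF assms(1,2)] assms(3)] in simp_all)

lemma \<xi>1_first_integral:
  assumes "(\<eta>0 \<longlongrightarrow> 0) (at_right 0)" "(\<eta>1 \<longlongrightarrow> 0) (at_right 0)"
    "(\<xi>1 \<longlongrightarrow> e2) (at_right 0)" "(\<xi>2 \<longlongrightarrow> - e1) (at_right 0)"
    "((\<lambda>t. of_real t * x0 t * y2 t) \<longlongrightarrow> 0) (at_right 0)" "s > 0"
  shows "\<xi>1 s = \<eta>1 s - \<xi>2 s + \<xi>2 s * \<eta>0 s - of_real s * x0 s * y2 s - (e1 - e2)"
proof -
  let ?I = "\<lambda>t. \<eta>1 t - \<xi>2 t + \<xi>2 t * \<eta>0 t - \<xi>1 t - of_real t * x0 t * y2 t"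
  have "?I s = e1 - e2"
  proof (rule eq_limit_at_right_if_vector_derivative_zero)
    fix t :: real assume t: "t > 0"
    let ?D = "dv \<eta>1 t - dv \<xi>2 t + (\<xi>2 t * dv \<eta>0 t + dv \<xi>2 t * \<eta>0 t) - dv \<xi>1 t
              - (x0 t * y2 t + (x0 t * (of_real t * dv y2 t) + (of_real t * dv x0 t) * y2 t))"
    have "(?I has_vector_derivative ?D) (at t)"
    proof -
      have "((\<lambda>t. of_real t :: complex) has_vector_derivative 1) (at t)"
        using has_vector_derivative_of_real[OF DERIV_ident] by simp
      then have "(?I has_vector_derivative
          dv \<eta>1 t - dv \<xi>2 t + (\<xi>2 t * dv \<eta>0 t + dv \<xi>2 t * \<eta>0 t) - dv \<xi>1 t
          - (of_real t * x0 t * dv y2 t + (of_real t * dv x0 t + 1 * x0 t) * y2 t)) (at t)"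
        using t by (intro has_vector_derivative_add has_vector_derivative_diff
            has_vector_derivative_mult has_vector_derivative_components)
      then show ?thesis by (simp add: algebra_simps)
    qed
    moreover have "?D = 0"
      using t by (simp add: x0_ode y2_ode \<xi>1_ode \<xi>2_ode \<eta>0_ode \<eta>1_ode algebra_simps)
    ultimately show "(?I has_vector_derivative 0) (at t)" by simp
  next
    have "(?I \<longlongrightarrow> 0 - (- e1) + (- e1) * 0 - e2 - 0) (at_right 0)"
      using assms by (intro tendsto_intros)
    then show "(?I \<longlongrightarrow> e1 - e2) (at_right 0)" by simp
  qed fact
  then show ?thesis by (simp add: algebra_simps)
qed

lemma \<eta>0_second_derivative:
  assumes "s > 0"
  shows "of_real s * dv (dv \<eta>0) s = (\<eta>0 s + \<xi>2 s) * x0 s * y2 s + x1 s * y2 s - x0 s * y1 s"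
proof -
  have "dv (dv \<eta>0) s = dv (\<lambda>t. - (x0 t * y2 t)) s"
    using assms by (intro vector_derivative_cong_open[of "{0<..}"]) (simp_all add: \<eta>0_ode)
  also have "\<dots> = - (x0 s * dv y2 s + dv x0 s * y2 s)"
    using assms by (intro vector_derivative_at has_vector_derivative_minus
        has_vector_derivative_mult has_vector_derivative_components)
  finally have d2: "dv (dv \<eta>0) s = - (x0 s * dv y2 s + dv x0 s * y2 s)" .
  have "of_real s * dv (dv \<eta>0) s = - (x0 s * (of_real s * dv y2 s) + (of_real s * dv x0 s) * y2 s)"
    unfolding d2 by (simp add: algebra_simps)
  then show ?thesis
    using assms by (simp add: x0_ode y2_ode algebra_simps)
qed

lemma \<eta>0_third_derivative:
  assumes "s > 0"
  shows "of_real s ^ 2 * dv (dv (dv \<eta>0)) s =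
      - 2 * of_real s * (x0 s * y2 s)\<^sup>2 - (\<eta>0 s + \<xi>2 s)\<^sup>2 * x0 s * y2 s
      - (\<eta>0 s + 2 * \<xi>2 s) * x1 s * y2 s + (2 * \<eta>0 s + \<xi>2 s) * x0 s * y1 s
      + (\<xi>1 s - \<eta>1 s) * x0 s * y2 s - x2 s * y2 s + 2 * x1 s * y1 s - x0 s * y0 s
      - of_real s * dv (dv \<eta>0) s" (is "_ = ?Q - _")
proof -
  define N where "N t = (\<eta>0 t + \<xi>2 t) * x0 t * y2 t + x1 t * y2 t - x0 t * y1 t" for t
  define N' where "N' = (dv \<eta>0 s + dv \<xi>2 s) * x0 s * y2 s
      + (\<eta>0 s + \<xi>2 s) * (dv x0 s * y2 s + x0 s * dv y2 s)
      + dv x1 s * y2 s + x1 s * dv y2 s - dv x0 s * y1 s - x0 s * dv y1 s"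
  have "(N has_vector_derivative N') (at s)"
  proof -
    have "(N has_vector_derivative
        ((\<eta>0 s + \<xi>2 s) * x0 s * dv y2 s + ((\<eta>0 s + \<xi>2 s) * dv x0 s + (dv \<eta>0 s + dv \<xi>2 s) * x0 s) * y2 s
         + (x1 s * dv y2 s + dv x1 s * y2 s) - (x0 s * dv y1 s + dv x0 s * y1 s))) (at s)"
      unfolding N_def using assms
      by (intro has_vector_derivative_add has_vector_derivative_diff
          has_vector_derivative_mult has_vector_derivative_components)
    then show ?thesis by (simp add: N'_def algebra_simps)
  qed
  then have dN: "dv N s = N'" and N_differentiable: "N differentiable (at s)"
    by (auto intro: vector_derivative_at differentiableI_vector)
  have "\<And>t. t > 0 \<Longrightarrow> dv (dv \<eta>0) t = N t / of_real t"
    using \<eta>0_second_derivative by (simp add: N_def field_simps)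
  then have "of_real s ^ 2 * dv (dv (dv \<eta>0)) s = of_real s * dv N s - N s"
    by (rule vector_derivative_divide_of_real[OF _ N_differentiable assms])
  also note dN
  also have "of_real s * N' = (dv \<eta>0 s + dv \<xi>2 s) * (of_real s * x0 s * y2 s)
      + (\<eta>0 s + \<xi>2 s) * ((of_real s * dv x0 s) * y2 s + x0 s * (of_real s * dv y2 s))
      + (of_real s * dv x1 s) * y2 s + x1 s * (of_real s * dv y2 s)
      - (of_real s * dv x0 s) * y1 s - x0 s * (of_real s * dv y1 s)"
    by (simp add: N'_def algebra_simps)
  also have "\<dots> = ?Q"
    unfolding x0_ode[OF assms] x1_ode[OF assms] y1_ode[OF assms] y2_ode[OF assms]
      \<xi>2_ode[OF assms] \<eta>0_ode[OF assms]
    by (simp add: algebra_simps power2_eq_square)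
  also have "N s = of_real s * dv (dv \<eta>0) s"
    using \<eta>0_second_derivative[OF assms] by (simp add: N_def)
  finally show ?thesis .
qed

end

text \<open>\<open>d1\<close>, \<open>d2\<close>, \<open>d3\<close> stand for \<open>\<eta>0'\<close>, \<open>\<eta>0''\<close>, \<open>\<eta>0'''\<close> at \<open>t\<close>; only \<open>t * d2\<close> and
  \<open>t\<^sup>2 * d3\<close> are known, and the right-hand side depends on nothing else.\<close>

lemma M2_invariant_identity:
  fixes x0 x1 x2 y0 y1 y2 \<xi>1 \<xi>2 \<eta>0 \<eta>1 e1 e2 t d1 d2 d3 :: "'a::comm_ring_1"
  assumes trace: "x0 * y0 + x1 * y1 + x2 * y2 = 0"
    and \<xi>2: "\<xi>2 = \<eta>0 - e1"
    and \<xi>1: "\<xi>1 = \<eta>1 - \<xi>2 + \<xi>2 * \<eta>0 - t * x0 * y2 - (e1 - e2)"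
    and d1: "d1 = - x0 * y2"
    and d2: "t * d2 = (\<eta>0 + \<xi>2) * x0 * y2 + x1 * y2 - x0 * y1"
    and d3: "t ^ 2 * d3 =
      - 2 * t * (x0 * y2)\<^sup>2 - (\<eta>0 + \<xi>2)\<^sup>2 * x0 * y2
      - (\<eta>0 + 2 * \<xi>2) * x1 * y2 + (2 * \<eta>0 + \<xi>2) * x0 * y1
      + (\<xi>1 - \<eta>1) * x0 * y2 - x2 * y2 + 2 * x1 * y1 - x0 * y0 - t * d2"
  shows "(- 3 * x0 * y1 - 3 * x1 * y2 - e1 * x0 * y2)\<^sup>2 =
      4 * e1\<^sup>2 * d1\<^sup>2 - 12 * e2 * d1\<^sup>2 + 12 * \<eta>0 * d1\<^sup>2 - 36 * t * d1 ^ 3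
      + 9 * t\<^sup>2 * d2\<^sup>2 - 12 * t * d1 * (d2 + t * d3)"
proof -
  have y0: "x0 * y0 = - x1 * y1 - x2 * y2"
    using trace by (simp add: algebra_simps eq_neg_iff_add_eq_0)
  have "4 * e1\<^sup>2 * d1\<^sup>2 - 12 * e2 * d1\<^sup>2 + 12 * \<eta>0 * d1\<^sup>2 - 36 * t * d1 ^ 3
      + 9 * t\<^sup>2 * d2\<^sup>2 - 12 * t * d1 * (d2 + t * d3) =
      4 * e1\<^sup>2 * d1\<^sup>2 - 12 * e2 * d1\<^sup>2 + 12 * \<eta>0 * d1\<^sup>2 - 36 * t * d1 ^ 3
      + 9 * (t * d2)\<^sup>2 - 12 * d1 * (t * d2 + t ^ 2 * d3)"
    by (simp add: algebra_simps power2_eq_square)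
  then show ?thesis
    unfolding d3 d2 d1 \<xi>1 \<xi>2
    by (simp add: algebra_simps power2_eq_square power3_eq_cube y0)
qed

theorem mainTheorem8:
  fixes \<nu>0 \<nu>1 \<nu>2 :: complex
    and x0 x1 x2 y0 y1 y2 \<xi>0 \<xi>1 \<xi>2 \<eta>0 \<eta>1 \<eta>2 :: "real \<Rightarrow> complex"
  defines "e1 \<equiv> \<nu>0 + \<nu>1 + \<nu>2"
      and "e2 \<equiv> \<nu>0 * \<nu>1 + \<nu>0 * \<nu>2 + \<nu>1 * \<nu>2"
      and "e3 \<equiv> \<nu>0 * \<nu>1 * \<nu>2"
  assumes nu: "\<nu>2 - \<nu>1 \<notin> \<int>"
    and diff: "\<forall>s>0. \<forall>f \<in> {x0, x1, x2, y0, y1, y2, \<xi>0, \<xi>1, \<xi>2, \<eta>0, \<eta>1, \<eta>2}.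
                 f differentiable (at s)"
    and sys: "\<forall>s>0.
        of_real s * dv x0 s = - \<eta>0 s * x0 s - x1 s \<and>
        of_real s * dv x1 s = - \<eta>1 s * x0 s - x2 s \<and>
        of_real s * dv x2 s = - \<eta>2 s * x0 s - of_real s * x0 s
                              + \<xi>0 s * x0 s + \<xi>1 s * x1 s + \<xi>2 s * x2 s \<and>
        of_real s * dv y2 s = - \<xi>2 s * y2 s + y1 s \<and>
        of_real s * dv y1 s = - \<xi>1 s * y2 s + y0 s \<and>
        of_real s * dv y0 s = - \<xi>0 s * y2 s + of_real s * y2 s
                              + \<eta>0 s * y0 s + \<eta>1 s * y1 s + \<eta>2 s * y2 s \<and>
        dv \<xi>0 s = - x0 s * y0 s \<and>
        dv \<xi>1 s = - x0 s * y1 s \<and>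
        dv \<xi>2 s = - x0 s * y2 s \<and>
        dv \<eta>0 s = - x0 s * y2 s \<and>
        dv \<eta>1 s = - x1 s * y2 s \<and>
        dv \<eta>2 s = - x2 s * y2 s"
    and B_eta: "(\<eta>0 \<longlongrightarrow> 0) (at_right 0)" "(\<eta>1 \<longlongrightarrow> 0) (at_right 0)"
               "(\<eta>2 \<longlongrightarrow> 0) (at_right 0)"
    and B_xi: "(\<xi>0 \<longlongrightarrow> - e3) (at_right 0)" "(\<xi>1 \<longlongrightarrow> e2) (at_right 0)"
              "(\<xi>2 \<longlongrightarrow> - e1) (at_right 0)"
    and B_xy: "\<forall>f \<in> {x0, x1, x2}. \<forall>g \<in> {y0, y1, y2}.
                 ((\<lambda>s. f s * g s) \<longlongrightarrow> 0) (at_right 0) \<and>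
                 ((\<lambda>s. of_real s * f s * g s) \<longlongrightarrow> 0) (at_right 0)"
    and nz: "\<forall>s>0. dv \<eta>0 s \<noteq> 0"
  shows "\<forall>s>0.
    (let F = - 3 * x0 s * y1 s - 3 * x1 s * y2 s - e1 * x0 s * y2 s;
         d1 = dv \<eta>0 s;
         d2 = dv (dv \<eta>0) s;
         d3 = dv (dv (dv \<eta>0)) s;
         t = (of_real s :: complex)
     in F^2 = 4 * e1^2 * d1^2 - 12 * e2 * d1^2 + 12 * \<eta>0 s * d1^2 - 36 * t * d1^3
              + 9 * t^2 * d2^2 - 12 * t * d1 * (d2 + t * d3))"
proof (intro allI impI)
  fix s :: real
  assume "s > 0"
  interpret M2_system x0 x1 x2 y0 y1 y2 \<xi>0 \<xi>1 \<xi>2 \<eta>0 \<eta>1 \<eta>2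
    using diff sys by unfold_locales blast+
  have trace: "x0 s * y0 s + x1 s * y1 s + x2 s * y2 s = 0"
    using B_xy \<open>s > 0\<close> by (intro trace_xy_eq_0) blast+
  have "((\<lambda>t. of_real t * x0 t * y2 t) \<longlongrightarrow> 0) (at_right 0)"
    using B_xy by blast
  then have \<xi>1: "\<xi>1 s = \<eta>1 s - \<xi>2 s + \<xi>2 s * \<eta>0 s - of_real s * x0 s * y2 s - (e1 - e2)"
    using B_eta B_xi \<open>s > 0\<close> by (intro \<xi>1_first_integral)
  show "let F = - 3 * x0 s * y1 s - 3 * x1 s * y2 s - e1 * x0 s * y2 s;
         d1 = dv \<eta>0 s;
         d2 = dv (dv \<eta>0) s;
         d3 = dv (dv (dv \<eta>0)) s;
         t = (of_real s :: complex)
     in F^2 = 4 * e1^2 * d1^2 - 12 * e2 * d1^2 + 12 * \<eta>0 s * d1^2 - 36 * t * d1^3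
              + 9 * t^2 * d2^2 - 12 * t * d1 * (d2 + t * d3)"
    unfolding Let_def
    using \<xi>2_eq_\<eta>0_minus_e1[OF B_xi(3) B_eta(1) \<open>s > 0\<close>] \<eta>0_ode \<eta>0_second_derivative
      \<eta>0_third_derivative \<open>s > 0\<close>
    by (intro M2_invariant_identity[OF trace _ \<xi>1]) simp_all
qed

end
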